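(* Let $A$ be a random real $N\times N$ matrix and $C$ a random vector in $\mathbb{R}^N$ whose $N^2+N$ entries are independent non-singular real random variables. Let $p_1,\dots,p_N\in\mathbb{C}[x]$ be linearly independent polynomials in one variable of degree at most $N-1$. Then $$\mathbb{P}\big(\det(p_1(A)C,\,p_2(A)C,\dots,p_N(A)C)=0\big)=0,$$ i.e. the vectors $p_1(A)C,\dots,p_N(A)C$ are linearly independent almost surely.
   Context: A real random variable $X$ is non-singular if $\mathbb{P}(X=a)=0$ for every $a\in\mathbb{R}$. *)

theory Defs
  imports "HOL-Probability.Probability" "HOL-Computational_Algebra.Polynomial"
begin

primrec mat_pow :: "('a::semiring_1)^'n^'n \<Rightarrow> nat \<Rightarrow> 'a^'n^'n" where
  "mat_pow A 0 = mat 1"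
| "mat_pow A (Suc k) = A ** mat_pow A k"

definition poly_mat :: "('a::comm_semiring_1) poly \<Rightarrow> 'a^'n^'n \<Rightarrow> 'a^'n^'n" where
  "poly_mat p A = (\<Sum>k\<le>degree p. (\<chi> i j. coeff p k * (mat_pow A k $ i $ j)))"

definition poly_lin_indep :: "('i::finite \<Rightarrow> ('a::field) poly) \<Rightarrow> bool" where
  "poly_lin_indep p \<longleftrightarrow>
     (\<forall>c :: 'i \<Rightarrow> 'a. (\<Sum>i\<in>UNIV. smult (c i) (p i)) = 0 \<longrightarrow> (\<forall>i. c i = 0))"

definition (in prob_space) non_singular :: "('a \<Rightarrow> real) \<Rightarrow> bool" where
  "non_singular Y \<longleftrightarrow> (\<forall>a::real. prob {\<omega> \<in> space M. Y \<omega> = a} = 0)"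

end

theory Submission
  imports Defs
begin

text \<open>
  The determinant is a function of the \<open>N\<^sup>2 + N\<close> real entries that is a polynomial in each entry
  separately. It is not identically zero: for the nilpotent shift matrix \<open>A\<close> and the first basis
  vector \<open>C\<close>, the vector \<open>p\<^sub>k(A) C\<close> is the coefficient vector of \<open>p\<^sub>k\<close>, so the determinant becomes the
  determinant of the coefficient matrix, which is nonzero by linear independence and the degree bound.
  A function that is polynomial in each coordinate and not identically zero vanishes only on a null
  set of any product of atomless probability measures: integrating out one coordinate, the section
  through a point is a nonzero one-variable polynomial with finitely many roots unless the function
  with that coordinate frozen vanishes there, which by induction happens only on a null set.
  Independence identifies the joint law of the entries with such a product.
\<close>

definition coordinatewise_polynomial :: "(('i \<Rightarrow> real) \<Rightarrow> 'b::{real_algebra_1,comm_ring_1}) \<Rightarrow> bool" where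
  "coordinatewise_polynomial f \<longleftrightarrow> (\<forall>x i. \<exists>q. \<forall>t. f (x(i := t)) = poly q (of_real t))"

lemma coordinatewise_polynomial_coordinate:
  "coordinatewise_polynomial (\<lambda>x. of_real (x i) :: 'b::{real_algebra_1,comm_ring_1})"
  unfolding coordinatewise_polynomial_def
proof (intro allI)
  fix x :: "'a \<Rightarrow> real" and j
  show "\<exists>q. \<forall>t. of_real ((x(j := t)) i) = (poly q (of_real t) :: 'b)"
  proof (cases "i = j")
    case True
    then show ?thesis by (intro exI[of _ "[:0, 1:]"]) simp
  next
    case False
    then show ?thesis by (intro exI[of _ "[:of_real (x i):]"]) simp
  qed
qed

lemma coordinatewise_polynomial_fun_upd:
  assumes "coordinatewise_polynomial f"
  shows "coordinatewise_polynomial (\<lambda>x. f (x(i := c)))"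
  unfolding coordinatewise_polynomial_def
proof (intro allI)
  fix x j
  show "\<exists>q. \<forall>t. f ((x(j := t))(i := c)) = poly q (of_real t)"
  proof (cases "j = i")
    case True
    then show ?thesis by (intro exI[of _ "[:f (x(i := c)):]"]) simp
  next
    case False
    obtain q where "\<forall>t. f ((x(i := c))(j := t)) = poly q (of_real t)"
      using assms unfolding coordinatewise_polynomial_def by blast
    with False show ?thesis by (metis fun_upd_twist)
  qed
qed

locale function_ring =
  fixes R :: "('x \<Rightarrow> 'b::comm_ring_1) \<Rightarrow> bool"
  assumes const_closed: "R (\<lambda>x. c)"
    and add_closed: "R f \<Longrightarrow> R g \<Longrightarrow> R (\<lambda>x. f x + g x)"
    and mult_closed: "R f \<Longrightarrow> R g \<Longrightarrow> R (\<lambda>x. f x * g x)"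
begin

lemma sum_closed: "(\<And>a. a \<in> S \<Longrightarrow> R (f a)) \<Longrightarrow> R (\<lambda>x. \<Sum>a\<in>S. f a x)"
  by (induction S rule: infinite_finite_induct) (auto intro: const_closed add_closed)

lemma prod_closed: "(\<And>a. a \<in> S \<Longrightarrow> R (f a)) \<Longrightarrow> R (\<lambda>x. \<Prod>a\<in>S. f a x)"
  by (induction S rule: infinite_finite_induct) (auto intro: const_closed mult_closed)

context
  fixes B :: "'x \<Rightarrow> 'b^'n::finite^'n"
  assumes B: "\<And>i j. R (\<lambda>x. B x $ i $ j)"
begin

lemma mat_pow_closed: "R (\<lambda>x. mat_pow (B x) k $ i $ j)"
proof (induction k arbitrary: i j)
  case 0
  show ?case using const_closed by (simp add: mat_def)
next
  case (Suc k)
  then show ?case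
    unfolding mat_pow.simps matrix_matrix_mult_def by (simp add: B sum_closed mult_closed)
qed

lemma poly_mat_closed: "R (\<lambda>x. poly_mat q (B x) $ i $ j)"
  unfolding poly_mat_def by (simp add: sum_closed mult_closed const_closed mat_pow_closed)

lemma det_closed: "R (\<lambda>x. det (B x))"
  unfolding det_def by (intro sum_closed mult_closed const_closed prod_closed B)

end

lemma matrix_vector_mult_closed:
  fixes B :: "'x \<Rightarrow> 'b^'n::finite^'m::finite" and v :: "'x \<Rightarrow> 'b^'n"
  assumes "\<And>i j. R (\<lambda>x. B x $ i $ j)" "\<And>j. R (\<lambda>x. v x $ j)"
  shows "R (\<lambda>x. (B x *v v x) $ i)"
  unfolding matrix_vector_mult_def using assms by (simp add: sum_closed mult_closed)

end

lemma function_ring_coordinatewise_polynomial: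
  "function_ring (coordinatewise_polynomial :: (('i \<Rightarrow> real) \<Rightarrow> 'b::{real_algebra_1,comm_ring_1}) \<Rightarrow> bool)"
proof
  fix c :: 'b
  show "coordinatewise_polynomial (\<lambda>x. c)"
    unfolding coordinatewise_polynomial_def by (auto intro!: exI[of _ "[:c:]"])
next
  fix f g :: "('i \<Rightarrow> real) \<Rightarrow> 'b"
  assume "coordinatewise_polynomial f" "coordinatewise_polynomial g"
  then show "coordinatewise_polynomial (\<lambda>x. f x + g x)" "coordinatewise_polynomial (\<lambda>x. f x * g x)"
    unfolding coordinatewise_polynomial_def by (metis poly_add, metis poly_mult)
qed

lemma function_ring_borel_measurable:
  "function_ring (\<lambda>f :: 'x \<Rightarrow> 'b::{real_normed_field,second_countable_topology}. f \<in> borel_measurable N)"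
  by unfold_locales auto

lemma AE_coordinatewise_polynomial_section_neq_0:
  fixes f :: "('i \<Rightarrow> real) \<Rightarrow> 'b::real_normed_field"
  assumes sets: "sets N = sets borel" and no_atoms: "\<And>a. emeasure N {a} = 0"
    and f: "coordinatewise_polynomial f" and nz: "f (x(i := c)) \<noteq> 0"
  shows "AE t in N. f (x(i := t)) \<noteq> 0"
proof -
  obtain q where q: "\<And>t. f (x(i := t)) = poly q (of_real t)"
    using f unfolding coordinatewise_polynomial_def by blast
  have "q \<noteq> 0" using nz q by auto
  then have "finite (of_real -` {z. poly q z = 0} :: real set)"
    by (intro finite_vimageI poly_roots_finite inj_of_real)
  then have fin: "finite {t. poly q (of_real t) = 0}" by (simp add: vimage_def)
  have "emeasure N {t. poly q (of_real t) = 0} = (\<integral>\<^sup>+t. emeasure N {t} \<partial>count_space {t. poly q (of_real t) = 0})"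
    using fin sets by (intro emeasure_countable_singleton) (auto intro: countable_finite)
  also have "\<dots> = 0" by (simp add: no_atoms)
  finally have "{t. poly q (of_real t) = 0} \<in> null_sets N"
    using fin sets by (simp add: null_sets_def finite_imp_closed)
  then show ?thesis by (rule AE_I') (auto simp: q)
qed

lemma nn_integral_section_zero_set_le:
  fixes f :: "('i \<Rightarrow> real) \<Rightarrow> 'b::real_normed_field"
  assumes "coordinatewise_polynomial f" and "prob_space N" and "sets N = sets borel"
    and "\<And>a. emeasure N {a} = 0"
  shows "(\<integral>\<^sup>+t. indicator {z. f z = 0} (y(i := t)) \<partial>N) \<le> indicator {y. f (y(i := c)) = 0} y"
proof (cases "f (y(i := c)) = 0")
  case True
  interpret prob_space N by fact
  have "(\<integral>\<^sup>+t. indicator {z. f z = 0} (y(i := t)) \<partial>N) \<le> (\<integral>\<^sup>+t. 1 \<partial>N)"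
    by (intro nn_integral_mono) (simp split: split_indicator)
  with True show ?thesis by (simp add: emeasure_space_1)
next
  case False
  then have "AE t in N. f (y(i := t)) \<noteq> 0"
    using assms by (intro AE_coordinatewise_polynomial_section_neq_0[where c=c]) (simp_all add: fun_upd_def)
  then have "(\<integral>\<^sup>+t. indicator {z. f z = 0} (y(i := t)) \<partial>N) = (\<integral>\<^sup>+t. 0 \<partial>N)"
    by (intro nn_integral_cong_AE) (auto split: split_indicator)
  then show ?thesis by simp
qed

lemma emeasure_PiM_zero_set_coordinatewise_polynomial:
  fixes D :: "'i \<Rightarrow> real measure" and f :: "('i \<Rightarrow> real) \<Rightarrow> 'b::real_normed_field"
  assumes prob: "\<And>i. prob_space (D i)" and sets: "\<And>i. sets (D i) = sets borel"
    and no_atoms: "\<And>i a. emeasure (D i) {a} = 0"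
    and "finite J" and "coordinatewise_polynomial f" and "f \<in> borel_measurable (PiM J D)"
    and "x \<in> space (PiM J D)" and "f x \<noteq> 0"
  shows "emeasure (PiM J D) {y \<in> space (PiM J D). f y = 0} = 0"
  using assms(4-)
proof (induction J arbitrary: f x rule: finite_induct)
  case empty
  then have "{y \<in> space (PiM {} D). f y = 0} = {}" by (auto simp: space_PiM_empty)
  then show ?case by (simp only:) simp
next
  case (insert v J)
  interpret product_sigma_finite D
    unfolding product_sigma_finite_def using prob_space_imp_sigma_finite prob by blast
  have f_meas[measurable]: "f \<in> borel_measurable (PiM (insert v J) D)" by fact
  define c where "c = x v"
  have c: "c \<in> space (D v)" using insert.prems by (auto simp: c_def space_PiM PiE_iff)
  define h where "h y = f (y(v := c))" for y
  have upd: "(\<lambda>y. y(v := c)) \<in> measurable (PiM J D) (PiM (insert v J) D)"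
    using measurable_fun_upd[where I="insert v J" and J=J and f="\<lambda>y. y" and N="PiM J D" and M=D
        and h="\<lambda>_. c" and i=v, OF _ measurable_id measurable_const[OF c]] by simp
  have h_meas[measurable]: "h \<in> borel_measurable (PiM J D)"
    unfolding h_def using measurable_comp[OF upd f_meas] by (simp add: comp_def)
  have "x(v := undefined) \<in> space (PiM J D)" "h (x(v := undefined)) \<noteq> 0"
    using insert.prems insert.hyps
    by (auto simp: h_def c_def space_PiM PiE_iff extensional_def)
  with insert.prems(1) have IH: "emeasure (PiM J D) {y \<in> space (PiM J D). h y = 0} = 0"
    unfolding h_def by (intro insert.IH coordinatewise_polynomial_fun_upd h_meas[unfolded h_def])
  let ?Z = "{y \<in> space (PiM (insert v J) D). f y = 0}"
  have Z: "?Z \<in> sets (PiM (insert v J) D)" by measurable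
  have "emeasure (PiM (insert v J) D) ?Z = (\<integral>\<^sup>+y. indicator ?Z y \<partial>PiM (insert v J) D)"
    using Z by simp
  also have "\<dots> = (\<integral>\<^sup>+y. (\<integral>\<^sup>+t. indicator ?Z (y(v := t)) \<partial>D v) \<partial>PiM J D)"
    using insert.hyps Z by (intro product_nn_integral_insert) auto
  also have "\<dots> \<le> (\<integral>\<^sup>+y. indicator {y \<in> space (PiM J D). h y = 0} y \<partial>PiM J D)"
  proof (intro nn_integral_mono)
    fix y assume y: "y \<in> space (PiM J D)"
    have "(\<integral>\<^sup>+t. indicator ?Z (y(v := t)) \<partial>D v) \<le> (\<integral>\<^sup>+t. indicator {z. f z = 0} (y(v := t)) \<partial>D v)"
      by (intro nn_integral_mono) (simp split: split_indicator)
    also have "\<dots> \<le> indicator {y. h y = 0} y"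
      unfolding h_def using insert.prems(1) prob sets no_atoms
      by (rule nn_integral_section_zero_set_le)
    also have "\<dots> = indicator {y \<in> space (PiM J D). h y = 0} y"
      using y by (simp add: indicator_def)
    finally show "(\<integral>\<^sup>+t. indicator ?Z (y(v := t)) \<partial>D v) \<le> \<dots>" .
  qed
  also have "\<dots> = 0" using IH by simp
  finally show ?case by simp
qed

lemma poly_mat_mult_vec_nth:
  "(poly_mat q B *v v) $ i = (\<Sum>m\<le>degree q. coeff q m * (mat_pow B m *v v) $ i)"
  unfolding poly_mat_def matrix_vector_mult_def
  by (simp add: sum_distrib_left sum_distrib_right mult.assoc sum.swap[of _ "{..degree q}"])

context
  fixes e :: "'n::finite \<Rightarrow> nat"
  assumes e: "bij_betw e UNIV {..<CARD('n)}"
begin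

lemma mat_pow_shift_mult_vec:
  "(mat_pow (\<chi> i j. if e i = Suc (e j) then 1 else 0) k *v (\<chi> j. if e j = 0 then 1 else 0)) $ i
     = (if e i = k then 1 else (0::'a::comm_semiring_1))"
proof (induction k arbitrary: i)
  case 0
  then show ?case by simp
next
  case (Suc k)
  let ?S = "(\<chi> i j. if e i = Suc (e j) then 1 else 0) :: 'a^'n^'n"
  let ?w = "mat_pow ?S k *v (\<chi> j. if e j = 0 then 1 else 0)"
  have "(mat_pow ?S (Suc k) *v (\<chi> j. if e j = 0 then 1 else 0)) $ i = (?S *v ?w) $ i"
    by (simp add: matrix_vector_mul_assoc)
  also have "\<dots> = (\<Sum>j\<in>UNIV. (\<lambda>m. if m = k then if e i = Suc k then 1 else 0 else 0) (e j))"
    unfolding matrix_vector_mult_def[of ?S ?w] vec_lambda_beta by (intro sum.cong) (simp_all add: Suc)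
  also have "\<dots> = (\<Sum>m<CARD('n). if m = k then if e i = Suc k then 1 else 0 else 0)"
    by (rule sum.reindex_bij_betw[OF e])
  also have "\<dots> = (if e i = Suc k then 1 else 0)"
    using bij_betw_apply[OF e, of i] by (auto simp: sum.delta)
  finally show ?case .
qed

lemma poly_mat_shift_mult_vec:
  "(poly_mat q (\<chi> i j. if e i = Suc (e j) then 1 else 0) *v (\<chi> j. if e j = 0 then 1 else 0)) $ i
     = coeff q (e i)"
  unfolding poly_mat_mult_vec_nth mat_pow_shift_mult_vec
  by (auto simp: if_distrib sum.delta coeff_eq_0 cong: if_cong)

lemma det_coeff_matrix_neq_0:
  fixes p :: "'n \<Rightarrow> 'a::field poly"
  assumes lin_indep: "poly_lin_indep p" and deg: "\<And>k. degree (p k) \<le> CARD('n) - 1"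
  shows "det (\<chi> i k. coeff (p k) (e i)) \<noteq> 0"
  unfolding invertible_det_nz[symmetric] invertible_left_inverse matrix_left_invertible_ker
proof (intro allI impI)
  fix c :: "'a^'n"
  assume c: "(\<chi> i k. coeff (p k) (e i)) *v c = 0"
  have "coeff (\<Sum>k\<in>UNIV. smult (c $ k) (p k)) m = 0" for m
  proof (cases "m < CARD('n)")
    case True
    then obtain i where "e i = m" using e by (metis bij_betw_iff_bijections lessThan_iff)
    then show ?thesis
      using arg_cong[OF c, of "\<lambda>w. w $ i"]
      by (simp add: coeff_sum matrix_vector_mult_def mult.commute)
  next
    case False
    then have "coeff (p k) m = 0" for k
      using deg[of k] zero_less_card_finite[where 'a='n] by (intro coeff_eq_0) linarith
    then show ?thesis by (simp add: coeff_sum)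
  qed
  then have "\<forall>k. c $ k = 0"
    using lin_indep unfolding poly_lin_indep_def by (metis poly_eqI coeff_0)
  then show "c = 0" by (simp add: vec_eq_iff)
qed

end

lemma (in prob_space) prob_zero_set_coordinatewise_polynomial:
  fixes X :: "'i::finite \<Rightarrow> 'a \<Rightarrow> real" and G :: "('i \<Rightarrow> real) \<Rightarrow> 'b::real_normed_field"
  assumes indep: "indep_vars (\<lambda>_. borel) X UNIV" and no_atoms: "\<And>i. non_singular (X i)"
    and G_meas: "G \<in> borel_measurable (PiM UNIV (\<lambda>_. borel))"
    and G_poly: "coordinatewise_polynomial G" and G_nz: "G y \<noteq> 0"
  shows "{\<omega> \<in> space M. G (\<lambda>i. X i \<omega>) = 0} \<in> events \<and> prob {\<omega> \<in> space M. G (\<lambda>i. X i \<omega>) = 0} = 0"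
proof -
  let ?P = "PiM UNIV (\<lambda>_. borel) :: ('i \<Rightarrow> real) measure"
  define D where "D = (\<lambda>i. distr M borel (X i))"
  have X_meas[measurable]: "X i \<in> borel_measurable M" for i
    using indep unfolding indep_vars_def by auto
  have Y_meas: "(\<lambda>\<omega> i. X i \<omega>) \<in> measurable M ?P"
    by (intro measurable_PiM_single') (auto simp: space_PiM)
  have distr_eq: "distr M ?P (\<lambda>\<omega> i. X i \<omega>) = PiM UNIV D"
    using indep_vars_iff_distr_eq_PiM[where I=UNIV and M'="\<lambda>_. borel" and X=X] indep
    by (simp add: restrict_UNIV D_def)
  have sets_D: "sets (D i) = sets borel" for i by (simp add: D_def)
  have sets_PiM_D: "sets (PiM UNIV D) = sets ?P"
    by (intro sets_PiM_cong) (simp_all add: sets_D)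
  have D_no_atoms: "emeasure (D i) {a} = 0" for i a
  proof -
    have "emeasure (D i) {a} = emeasure M {\<omega> \<in> space M. X i \<omega> = a}"
      unfolding D_def by (subst emeasure_distr) (auto simp: vimage_def Int_def conj_commute)
    then show ?thesis using no_atoms[of i] by (simp add: non_singular_def emeasure_eq_measure)
  qed
  let ?Z = "{x \<in> space ?P. G x = 0}"
  have Z: "?Z \<in> sets ?P" using G_meas by measurable
  have "emeasure (PiM UNIV D) {x \<in> space (PiM UNIV D). G x = 0} = 0"
    using G_meas measurable_cong_sets[OF sets_PiM_D refl] G_poly G_nz D_no_atoms
    by (intro emeasure_PiM_zero_set_coordinatewise_polynomial[where x=y])
       (auto simp: D_def space_PiM prob_space_distr)
  then have "measure (distr M ?P (\<lambda>\<omega> i. X i \<omega>)) ?Z = 0"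
    unfolding distr_eq measure_def by (simp add: space_PiM D_def)
  moreover have "(\<lambda>\<omega> i. X i \<omega>) -` ?Z \<inter> space M = {\<omega> \<in> space M. G (\<lambda>i. X i \<omega>) = 0}"
    by (auto simp: space_PiM)
  ultimately show ?thesis
    using measurable_sets[OF Y_meas Z] measure_distr[OF Y_meas Z] by simp
qed

theorem mainTheorem11:
  fixes M :: "'a measure"
    and X :: "(('n::finite \<times> 'n) + 'n) \<Rightarrow> 'a \<Rightarrow> real"
    and p :: "'n \<Rightarrow> complex poly"
  assumes "prob_space M"
    and indep: "prob_space.indep_vars M (\<lambda>_. borel) X UNIV"
    and nonsing: "\<And>k. prob_space.non_singular M (X k)"
    and lin_indep: "poly_lin_indep p"
    and deg: "\<And>k. degree (p k) \<le> CARD('n) - 1"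
  defines "A \<equiv> (\<lambda>\<omega>. (\<chi> i j. X (Inl (i, j)) \<omega>) :: real^'n^'n)"
    and "C \<equiv> (\<lambda>\<omega>. (\<chi> i. X (Inr i) \<omega>) :: real^'n)"
  shows "{\<omega> \<in> space M.
            det (\<chi> i k. (poly_mat (p k) (map_matrix complex_of_real (A \<omega>))
                          *v (\<chi> j. complex_of_real (C \<omega> $ j))) $ i) = 0} \<in> sets M
       \<and> measure M {\<omega> \<in> space M.
            det (\<chi> i k. (poly_mat (p k) (map_matrix complex_of_real (A \<omega>))
                          *v (\<chi> j. complex_of_real (C \<omega> $ j))) $ i) = 0} = 0"
proof -
  interpret prob_space M by fact
  define G :: "(('n \<times> 'n) + 'n \<Rightarrow> real) \<Rightarrow> complex" where
    "G y = det (\<chi> i k. (poly_mat (p k) (\<chi> i j. of_real (y (Inl (i, j)))) *v (\<chi> j. of_real (y (Inr j)))) $ i)"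
    for y
  interpret meas: function_ring "\<lambda>f :: _ \<Rightarrow> complex. f \<in> borel_measurable (PiM UNIV (\<lambda>_. borel))"
    by (rule function_ring_borel_measurable)
  interpret poly: function_ring coordinatewise_polynomial
    by (rule function_ring_coordinatewise_polynomial)
  have G_meas: "G \<in> borel_measurable (PiM UNIV (\<lambda>_. borel))"
    unfolding G_def
    by (rule meas.det_closed, simp, rule meas.matrix_vector_mult_closed, rule meas.poly_mat_closed)
      (simp_all add: measurable_component_singleton)
  have G_poly: "coordinatewise_polynomial G"
    unfolding G_def
    by (rule poly.det_closed, simp, rule poly.matrix_vector_mult_closed, rule poly.poly_mat_closed)
      (simp_all add: coordinatewise_polynomial_coordinate)
  obtain e :: "'n \<Rightarrow> nat" where e: "bij_betw e UNIV {..<CARD('n)}"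
    using ex_bij_betw_finite_nat[of "UNIV :: 'n set"] by (auto simp: atLeast0LessThan)
  \<comment> \<open>At the nilpotent shift matrix and the first basis vector the Krylov vectors are the basis vectors.\<close>
  define y :: "('n \<times> 'n) + 'n \<Rightarrow> real" where
    "y z = (case z of Inl (i, j) \<Rightarrow> if e i = Suc (e j) then 1 else 0 | Inr j \<Rightarrow> if e j = 0 then 1 else 0)"
    for z
  have "(\<chi> i j. complex_of_real (y (Inl (i, j)))) = (\<chi> i j. if e i = Suc (e j) then 1 else 0)"
    "(\<chi> j. complex_of_real (y (Inr j))) = (\<chi> j. if e j = 0 then 1 else 0)"
    by (simp_all add: y_def vec_eq_iff)
  then have "G y = det (\<chi> i k. coeff (p k) (e i))"
    unfolding G_def by (simp add: poly_mat_shift_mult_vec[OF e])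
  then have G_nz: "G y \<noteq> 0" using det_coeff_matrix_neq_0[OF e lin_indep deg] by simp
  from prob_zero_set_coordinatewise_polynomial[OF indep nonsing G_meas G_poly G_nz] show ?thesis
    by (simp add: G_def A_def C_def map_matrix_def)
qed

end
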